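(* Let $\Omega$ be a metrizable compact space and $c$ a capacity on $\mathcal{L}$. Then the Banach space $L^1(c)$ is separable and the unit ball of $L^1(c)^*$ is metrizable compact for the weak* topology $\sigma(L^1(c)^*,L^1(c))$.
   Context: $\mathcal{L}\subset\mathcal{C}_b(\Omega)$ is a linear subspace which is a vector lattice, contains the constants and generates the topology. A capacity on $\mathcal{L}$ is a seminorm $c$ with $c(f)\le c(g)$ whenever $|f|\le|g|$ and $\inf_n c(f_n)=0$ for $f_n\in\mathcal{L}$ decreasing to $0$; it is extended to all functions by $c(f)=\sup\{c(\varphi):\varphi\in\mathcal{L},0\le\varphi\le f\}$ for $f\ge0$ l.s.c. and $c(g)=\inf\{c(f):f\text{ l.s.c.},f\ge|g|\}$. $L^1(c)$ is the Banach space obtained as the quotient by $c$-null elements of the $c$-closure of $\mathcal{L}$ in $\{g:c(g)<\infty\}$ (it contains $\mathcal{C}_b(\Omega)$). *)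

theory Defs
  imports "HOL-Analysis.Analysis"
begin

definition Cb :: "('a::topological_space \<Rightarrow> real) set" where
  "Cb = {f. continuous_on UNIV f \<and> bounded (range f)}"

definition admissible_lattice :: "('a::topological_space \<Rightarrow> real) set \<Rightarrow> bool" where
  "admissible_lattice L \<longleftrightarrow>
     L \<subseteq> Cb \<and>
     (\<forall>f\<in>L. \<forall>g\<in>L. (\<lambda>x. f x + g x) \<in> L) \<and>
     (\<forall>f\<in>L. \<forall>r::real. (\<lambda>x. r * f x) \<in> L) \<and>
     (\<forall>f\<in>L. \<forall>g\<in>L. (\<lambda>x. max (f x) (g x)) \<in> L \<and> (\<lambda>x. min (f x) (g x)) \<in> L) \<and>
     (\<forall>r::real. (\<lambda>_. r) \<in> L) \<and>
     (\<forall>S. open S \<longleftrightarrow> generate_topology {f -` U | f U. f \<in> L \<and> open U} S)"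

definition capacity :: "('a \<Rightarrow> real) set \<Rightarrow> (('a \<Rightarrow> real) \<Rightarrow> real) \<Rightarrow> bool" where
  "capacity L c \<longleftrightarrow>
     (\<forall>f\<in>L. \<forall>g\<in>L. c (\<lambda>x. f x + g x) \<le> c f + c g) \<and>
     (\<forall>f\<in>L. \<forall>r. c (\<lambda>x. r * f x) = \<bar>r\<bar> * c f) \<and>
     (\<forall>f\<in>L. \<forall>g\<in>L. (\<forall>x. \<bar>f x\<bar> \<le> \<bar>g x\<bar>) \<longrightarrow> c f \<le> c g) \<and>
     (\<forall>F. (\<forall>n. F n \<in> L) \<and> (\<forall>n x. F (Suc n) x \<le> F n x) \<and> (\<forall>x. (\<lambda>n. F n x) \<longlonglongrightarrow> 0)
          \<longrightarrow> (INF n. c (F n)) = 0)"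

definition lsc :: "('a::topological_space \<Rightarrow> ennreal) \<Rightarrow> bool" where
  "lsc f \<longleftrightarrow> (\<forall>t. open {x. t < f x})"

definition cap_lsc :: "('a \<Rightarrow> real) set \<Rightarrow> (('a \<Rightarrow> real) \<Rightarrow> real) \<Rightarrow> ('a \<Rightarrow> ennreal) \<Rightarrow> ennreal" where
  "cap_lsc L c f = (SUP \<phi>\<in>{\<phi>\<in>L. \<forall>x. 0 \<le> \<phi> x \<and> ennreal (\<phi> x) \<le> f x}. ennreal (c \<phi>))"

definition cap_ext :: "('a::topological_space \<Rightarrow> real) set \<Rightarrow> (('a \<Rightarrow> real) \<Rightarrow> real) \<Rightarrow> ('a \<Rightarrow> real) \<Rightarrow> ennreal" where
  "cap_ext L c g = (INF f\<in>{f. lsc f \<and> (\<forall>x. ennreal \<bar>g x\<bar> \<le> f x)}. cap_lsc L c f)"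

text \<open>The c-closure of L inside {g. c(g) < \<infinity>}; L^1(c) is its quotient by c-null
  functions, with norm induced by c.\<close>
definition L1_space :: "('a::topological_space \<Rightarrow> real) set \<Rightarrow> (('a \<Rightarrow> real) \<Rightarrow> real) \<Rightarrow> ('a \<Rightarrow> real) set" where
  "L1_space L c = {g. cap_ext L c g < \<infinity> \<and>
      (\<forall>e>0. \<exists>\<phi>\<in>L. cap_ext L c (\<lambda>x. g x - \<phi> x) < ennreal e)}"

text \<open>Unit ball of the dual L^1(c)^*: linear functionals on L1_space of norm \<le> 1
  (they automatically vanish on null functions, hence descend to the quotient),
  represented as extensional functions on L1_space.\<close>
definition dual_ball :: "('a::topological_space \<Rightarrow> real) set \<Rightarrow> (('a \<Rightarrow> real) \<Rightarrow> real) \<Rightarrow> (('a \<Rightarrow> real) \<Rightarrow> real) set" where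
  "dual_ball L c = {u. u \<in> extensional (L1_space L c) \<and>
      (\<forall>g\<in>L1_space L c. \<forall>h\<in>L1_space L c. u (\<lambda>x. g x + h x) = u g + u h) \<and>
      (\<forall>g\<in>L1_space L c. \<forall>r. u (\<lambda>x. r * g x) = r * u g) \<and>
      (\<forall>g\<in>L1_space L c. ennreal \<bar>u g\<bar> \<le> cap_ext L c g)}"

text \<open>Weak* topology on the dual unit ball: topology of pointwise convergence on L1_space.\<close>
definition weak_star_ball :: "('a::topological_space \<Rightarrow> real) set \<Rightarrow> (('a \<Rightarrow> real) \<Rightarrow> real) \<Rightarrow> (('a \<Rightarrow> real) \<Rightarrow> real) topology" where
  "weak_star_ball L c = subtopology (product_topology (\<lambda>_. euclideanreal) (L1_space L c)) (dual_ball L c)"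

end

theory Submission
  imports Defs
begin

text \<open>Since \<Omega> is compact metrizable, it is second countable, and a finite-cover argument
  gives a countable subset of L that is dense for the sup norm. Sup-norm approximation is
  controlled by the capacity: cap_ext (g - \<psi>) \<le> cap_ext (g - \<phi>) + sup |\<phi> - \<psi>| * c 1.
  As L is c-dense in L^1(c) by definition, that countable set is dense in L^1(c).

  The dual unit ball is closed in the product of the compact intervals [-c g, c g], so it is
  weak* compact (Tychonoff). Restriction to the countable dense set is a continuous injection
  of the ball into the metrizable space \<real>^D, hence an embedding, so the ball is metrizable.\<close>

lemma compact_metrizable_imp_second_countable:
  assumes "compact_space X" and "metrizable_space X"
  shows "second_countable X"
proof -
  obtain M d where "Metric_space M d" and X: "X = Metric_space.mtopology M d"
    using assms(2) unfolding metrizable_space_def by blast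
  interpret Metric_space M d by fact
  have "mtotally_bounded M"
    using assms(1) X compactin_imp_mtotally_bounded by (simp add: compact_space_def)
  then have "\<forall>n::nat. \<exists>K. finite K \<and> K \<subseteq> M \<and> M \<subseteq> (\<Union>x\<in>K. mball x (1 / Suc n))"
    unfolding mtotally_bounded_def by simp
  then obtain K where K: "\<And>n. finite (K n)" "\<And>n. K n \<subseteq> M"
    and cover: "\<And>n. M \<subseteq> (\<Union>x\<in>K n. mball x (1 / Suc n))"
    by metis
  define \<B> where "\<B> = (\<Union>n. (\<lambda>x. mball x (1 / Suc n)) ` K n)"
  have "countable \<B>"
    unfolding \<B>_def by (simp add: countable_finite K(1))
  moreover have "\<forall>V\<in>\<B>. openin X V"
    unfolding \<B>_def X by auto
  moreover have "\<exists>V\<in>\<B>. x \<in> V \<and> V \<subseteq> U" if U: "openin X U" and x: "x \<in> U" for U x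
  proof -
    obtain r where "r > 0" and r: "mball x r \<subseteq> U"
      using U x openin_mtopology X by metis
    obtain n where n: "1 / Suc n < r / 2"
      using \<open>r > 0\<close> by (metis reals_Archimedean half_gt_zero inverse_eq_divide)
    have "x \<in> M" using U x openin_subset X by fastforce
    then obtain y where y: "y \<in> K n" "x \<in> mball y (1 / Suc n)"
      using cover by blast
    have "mball y (1 / Suc n) \<subseteq> mball x r"
    proof
      fix z assume "z \<in> mball y (1 / Suc n)"
      then have "d x z \<le> d x y + d y z" and "d x y < 1 / Suc n" "d y z < 1 / Suc n"
        using y triangle commute by auto
      then show "z \<in> mball x r"
        using n \<open>x \<in> M\<close> \<open>z \<in> mball y (1 / Suc n)\<close> by auto
    qed
    then show ?thesis
      using y r unfolding \<B>_def by blast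
  qed
  ultimately show ?thesis
    unfolding second_countable_def by blast
qed

definition cover_cell :: "('a set \<times> real) set \<Rightarrow> real \<Rightarrow> ('a \<Rightarrow> real) set" where
  "cover_cell \<Phi> q = {g. \<Union>(fst ` \<Phi>) = UNIV \<and> (\<forall>(V, r)\<in>\<Phi>. \<forall>y\<in>V. \<bar>g y - r\<bar> < q)}"

lemma cover_cell_dist:
  assumes "f \<in> cover_cell \<Phi> q" and "g \<in> cover_cell \<Phi> q"
  shows "\<bar>f x - g x\<bar> < 2 * q"
proof -
  have "x \<in> \<Union>(fst ` \<Phi>)"
    using assms(1) unfolding cover_cell_def by simp
  then obtain V r where "(V, r) \<in> \<Phi>" "x \<in> V"
    by auto
  then have "\<bar>f x - r\<bar> < q" "\<bar>g x - r\<bar> < q"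
    using assms unfolding cover_cell_def by auto
  then show ?thesis
    by linarith
qed

lemma finite_rational_cover_cell:
  fixes f :: "'a::topological_space \<Rightarrow> real"
  assumes "compact (UNIV :: 'a set)" and "\<forall>V\<in>\<B>. open V"
    and base: "\<And>U x. open U \<Longrightarrow> x \<in> U \<Longrightarrow> \<exists>V\<in>\<B>. x \<in> V \<and> V \<subseteq> U"
    and "continuous_on UNIV f" and "e > 0"
  obtains \<Phi> where "finite \<Phi>" "\<Phi> \<subseteq> \<B> \<times> \<rat>" "f \<in> cover_cell \<Phi> e"
proof -
  define \<C> where "\<C> = {V\<in>\<B>. \<exists>r\<in>\<rat>. \<forall>y\<in>V. \<bar>f y - r\<bar> < e}"
  have "\<exists>V\<in>\<C>. x \<in> V" for x
  proof -
    have "open (f -` {f x - e/2 <..< f x + e/2})"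
      using \<open>continuous_on UNIV f\<close> by (simp add: continuous_on_open_vimage)
    moreover have "x \<in> f -` {f x - e/2 <..< f x + e/2}"
      using \<open>e > 0\<close> by simp
    ultimately obtain V where V: "V \<in> \<B>" "x \<in> V" "V \<subseteq> f -` {f x - e/2 <..< f x + e/2}"
      using base by blast
    obtain r where r: "r \<in> \<rat>" "f x - e/2 < r" "r < f x + e/2"
      using Rats_dense_in_real[of "f x - e/2" "f x + e/2"] \<open>e > 0\<close> by auto
    have "\<bar>f y - r\<bar> < e" if "y \<in> V" for y
    proof -
      have "f x - e/2 < f y" "f y < f x + e/2"
        using V(3) that by auto
      then show ?thesis
        using r by linarith
    qed
    then show ?thesis
      using V(1,2) r(1) unfolding \<C>_def by blast
  qed
  then have "UNIV \<subseteq> \<Union>\<C>"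
    by blast
  moreover have "\<And>V. V \<in> \<C> \<Longrightarrow> open V"
    using assms(2) unfolding \<C>_def by blast
  ultimately obtain \<C>' where "\<C>' \<subseteq> \<C>" "finite \<C>'" "UNIV \<subseteq> \<Union>\<C>'"
    by (rule compactE[OF assms(1)])
  have "\<forall>V\<in>\<C>'. \<exists>r. r \<in> \<rat> \<and> (\<forall>y\<in>V. \<bar>f y - r\<bar> < e)"
    using \<open>\<C>' \<subseteq> \<C>\<close> unfolding \<C>_def by blast
  then obtain r where r: "\<forall>V\<in>\<C>'. r V \<in> \<rat> \<and> (\<forall>y\<in>V. \<bar>f y - r V\<bar> < e)"
    by (rule bchoice[elim_format]) blast
  show thesis
  proof
    show "finite ((\<lambda>V. (V, r V)) ` \<C>')"
      using \<open>finite \<C>'\<close> by simp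
    show "(\<lambda>V. (V, r V)) ` \<C>' \<subseteq> \<B> \<times> \<rat>"
      using \<open>\<C>' \<subseteq> \<C>\<close> r unfolding \<C>_def by auto
    have "\<Union>(fst ` (\<lambda>V. (V, r V)) ` \<C>') = UNIV"
      using \<open>UNIV \<subseteq> \<Union>\<C>'\<close> by (auto simp: image_image)
    moreover have "\<forall>(V, s)\<in>(\<lambda>V. (V, r V)) ` \<C>'. \<forall>y\<in>V. \<bar>f y - s\<bar> < e"
      using r by auto
    ultimately show "f \<in> cover_cell ((\<lambda>V. (V, r V)) ` \<C>') e"
      unfolding cover_cell_def by blast
  qed
qed

lemma countable_uniformly_dense_subset:
  fixes F :: "('a::topological_space \<Rightarrow> real) set"
  assumes "compact (UNIV :: 'a set)" and "second_countable (euclidean :: 'a topology)"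
    and "\<And>f. f \<in> F \<Longrightarrow> continuous_on UNIV f"
  shows "\<exists>D. countable D \<and> D \<subseteq> F \<and> (\<forall>f\<in>F. \<forall>e>0. \<exists>g\<in>D. \<forall>x. \<bar>f x - g x\<bar> < e)"
proof -
  obtain \<B> :: "'a set set" where "countable \<B>" "\<forall>V\<in>\<B>. open V"
    and base: "\<And>U x. open U \<Longrightarrow> x \<in> U \<Longrightarrow> \<exists>V\<in>\<B>. x \<in> V \<and> V \<subseteq> U"
    using assms(2) unfolding second_countable_def by auto
  define I where "I = {(\<Phi>, q). finite \<Phi> \<and> \<Phi> \<subseteq> \<B> \<times> \<rat> \<and> q \<in> \<rat> \<and> F \<inter> cover_cell \<Phi> q \<noteq> {}}"
  define pick where "pick \<Phi> q = (SOME g. g \<in> F \<inter> cover_cell \<Phi> q)" for \<Phi> q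
  define D where "D = case_prod pick ` I"
  have pick: "pick \<Phi> q \<in> F \<inter> cover_cell \<Phi> q" if "(\<Phi>, q) \<in> I" for \<Phi> q
  proof -
    have "F \<inter> cover_cell \<Phi> q \<noteq> {}"
      using that unfolding I_def by simp
    then show ?thesis
      unfolding pick_def by (rule some_in_eq[THEN iffD2])
  qed
  have "countable I"
  proof (rule countable_subset)
    show "I \<subseteq> {\<Phi>. finite \<Phi> \<and> \<Phi> \<subseteq> \<B> \<times> \<rat>} \<times> \<rat>"
      unfolding I_def by auto
    show "countable ({\<Phi>. finite \<Phi> \<and> \<Phi> \<subseteq> \<B> \<times> \<rat>} \<times> \<rat>)"
      by (intro countable_SIGMA countable_Collect_finite_subset \<open>countable \<B>\<close> countable_rat)
  qed
  then have "countable D"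
    unfolding D_def by simp
  moreover have "D \<subseteq> F"
  proof
    fix g assume "g \<in> D"
    then obtain \<Phi> q where "(\<Phi>, q) \<in> I" "g = pick \<Phi> q"
      unfolding D_def by auto
    then show "g \<in> F"
      using pick by blast
  qed
  moreover have "\<exists>g\<in>D. \<forall>x. \<bar>f x - g x\<bar> < e" if "f \<in> F" "e > 0" for f e
  proof -
    obtain q where "q \<in> \<rat>" "0 < q" "q < e / 2"
      using Rats_dense_in_real[of 0 "e / 2"] \<open>e > 0\<close> by auto
    obtain \<Phi> where "finite \<Phi>" "\<Phi> \<subseteq> \<B> \<times> \<rat>" "f \<in> cover_cell \<Phi> q"
      by (rule finite_rational_cover_cell[OF assms(1) \<open>\<forall>V\<in>\<B>. open V\<close> base
            assms(3)[OF \<open>f \<in> F\<close>] \<open>0 < q\<close>])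
    then have "(\<Phi>, q) \<in> I"
      unfolding I_def using \<open>f \<in> F\<close> \<open>q \<in> \<rat>\<close> by auto
    then have "pick \<Phi> q \<in> cover_cell \<Phi> q"
      using pick by blast
    then have "\<bar>f x - pick \<Phi> q x\<bar> < e" for x
      using cover_cell_dist[OF \<open>f \<in> cover_cell \<Phi> q\<close>, of "pick \<Phi> q" x] \<open>q < e / 2\<close> by linarith
    moreover have "pick \<Phi> q \<in> D"
      unfolding D_def using \<open>(\<Phi>, q) \<in> I\<close> by (rule rev_image_eqI) simp
    ultimately show ?thesis
      by blast
  qed
  ultimately show ?thesis
    by blast
qed

lemma lsc_const: "lsc (\<lambda>_. a)"
  unfolding lsc_def by simp

lemma lsc_add_const:
  assumes "lsc f"
  shows "lsc (\<lambda>x. f x + ennreal M)"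
  unfolding lsc_def
proof
  fix t :: ennreal
  show "open {x. t < f x + ennreal M}"
  proof (cases "t < ennreal M")
    case True
    then have "{x. t < f x + ennreal M} = UNIV"
      by (auto intro: order.strict_trans2 add_increasing)
    then show ?thesis by simp
  next
    case False
    then have "{x. t < f x + ennreal M} = {x. t - ennreal M < f x}"
      by (simp add: minus_less_iff_ennreal)
    then show ?thesis
      using assms unfolding lsc_def by simp
  qed
qed

lemma continuous_map_product_coordinate:
  "continuous_map (product_topology (\<lambda>_. euclidean) I) (euclidean :: 'b::topological_space topology) (\<lambda>u. u z)"
proof (cases "z \<in> I")
  case True
  then show ?thesis by (rule continuous_map_product_projection)
next
  case False
  have "continuous_map (product_topology (\<lambda>_. euclidean) I) euclidean (\<lambda>_. undefined :: 'b)"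
    by simp
  then show ?thesis
    by (rule continuous_map_eq) (use False in \<open>simp add: PiE_def extensional_def\<close>)
qed

lemma closedin_Collect_Ball:
  assumes "\<And>i. i \<in> J \<Longrightarrow> closedin X {x \<in> topspace X. P i x}"
  shows "closedin X {x \<in> topspace X. \<forall>i\<in>J. P i x}"
proof (cases "J = {}")
  case True
  then show ?thesis by simp
next
  case False
  have "{x \<in> topspace X. \<forall>i\<in>J. P i x} = (\<Inter>i\<in>J. {x \<in> topspace X. P i x})"
    using False by auto
  then show ?thesis
    using False assms by auto
qed

lemma metrizable_space_if_continuous_injective:
  assumes "compact_space X" and "metrizable_space Y"
    and "continuous_map X Y f" and "inj_on f (topspace X)"
  shows "metrizable_space X"
proof -
  have "closed_map X Y f"
    using assms by (simp add: continuous_imp_closed_map metrizable_imp_Hausdorff_space)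
  then have "embedding_map X Y f"
    using assms by (simp add: injective_closed_imp_embedding_map)
  then have "X homeomorphic_space subtopology Y (f ` topspace X)"
    by (rule embedding_map_imp_homeomorphic_space)
  then show ?thesis
    using assms(2) homeomorphic_metrizable_space metrizable_space_subtopology by blast
qed

locale lattice_capacity =
  fixes L :: "('a::topological_space \<Rightarrow> real) set" and c :: "('a \<Rightarrow> real) \<Rightarrow> real"
  assumes admissible: "admissible_lattice L" and capacity: "capacity L c"
begin

lemma L_add: "f \<in> L \<Longrightarrow> g \<in> L \<Longrightarrow> (\<lambda>x. f x + g x) \<in> L"
  and L_scale: "f \<in> L \<Longrightarrow> (\<lambda>x. r * f x) \<in> L"
  and L_max: "f \<in> L \<Longrightarrow> g \<in> L \<Longrightarrow> (\<lambda>x. max (f x) (g x)) \<in> L"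
  and L_min: "f \<in> L \<Longrightarrow> g \<in> L \<Longrightarrow> (\<lambda>x. min (f x) (g x)) \<in> L"
  and L_const: "(\<lambda>_. r) \<in> L"
  and L_continuous: "f \<in> L \<Longrightarrow> continuous_on UNIV f"
  and L_bounded: "f \<in> L \<Longrightarrow> bounded (range f)"
  using admissible unfolding admissible_lattice_def Cb_def by blast+

lemma c_add: "f \<in> L \<Longrightarrow> g \<in> L \<Longrightarrow> c (\<lambda>x. f x + g x) \<le> c f + c g"
  and c_scale: "f \<in> L \<Longrightarrow> c (\<lambda>x. r * f x) = \<bar>r\<bar> * c f"
  and c_mono: "f \<in> L \<Longrightarrow> g \<in> L \<Longrightarrow> (\<And>x. \<bar>f x\<bar> \<le> \<bar>g x\<bar>) \<Longrightarrow> c f \<le> c g"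
  using capacity unfolding capacity_def by blast+

lemma L_diff: "f \<in> L \<Longrightarrow> g \<in> L \<Longrightarrow> (\<lambda>x. f x - g x) \<in> L"
  using L_add[of f "\<lambda>x. -1 * g x"] L_scale[of g "-1"] by simp

lemma L_bounded_abs:
  assumes "f \<in> L"
  obtains M where "0 \<le> M" "\<And>x. \<bar>f x\<bar> \<le> M"
proof -
  obtain M where M: "\<forall>y\<in>range f. norm y \<le> M"
    using L_bounded[OF assms] unfolding bounded_iff by blast
  then have "\<And>x. \<bar>f x\<bar> \<le> M"
    by simp
  moreover have "0 \<le> M"
    using calculation[of undefined] by linarith
  ultimately show thesis
    using that by blast
qed

lemma c_nonneg:
  assumes "f \<in> L"
  shows "0 \<le> c f"
proof -
  have "c (\<lambda>x. 0 * f x) \<le> c f + c (\<lambda>x. -1 * f x)"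
    using c_add[OF assms L_scale[OF assms, of "-1"]] by simp
  then show ?thesis
    using c_scale[OF assms, of 0] c_scale[OF assms, of "-1"] by simp
qed

lemma cap_lsc_add_const:
  assumes "0 \<le> M"
  shows "cap_lsc L c (\<lambda>x. f x + ennreal M) \<le> cap_lsc L c f + ennreal (M * c (\<lambda>_. 1))"
  unfolding cap_lsc_def[of L c "\<lambda>x. f x + ennreal M"]
proof (rule SUP_least)
  fix \<phi> assume "\<phi> \<in> {\<phi> \<in> L. \<forall>x. 0 \<le> \<phi> x \<and> ennreal (\<phi> x) \<le> f x + ennreal M}"
  then have \<phi>: "\<phi> \<in> L" "\<And>x. 0 \<le> \<phi> x" "\<And>x. ennreal (\<phi> x) \<le> f x + ennreal M"
    by auto
  \<comment> \<open>\<phi> splits into a part dominated by the constant M and a part admissible for cap_lsc f\<close>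
  define \<phi>\<^sub>1 where "\<phi>\<^sub>1 x = min (\<phi> x) M" for x
  define \<phi>\<^sub>2 where "\<phi>\<^sub>2 x = max (\<phi> x - M) 0" for x
  have "\<phi>\<^sub>1 \<in> L"
    unfolding \<phi>\<^sub>1_def using L_min[OF \<phi>(1) L_const] .
  have "\<phi>\<^sub>2 \<in> L"
    unfolding \<phi>\<^sub>2_def using L_max[OF L_diff[OF \<phi>(1) L_const] L_const] .
  have \<phi>\<^sub>1_le: "c \<phi>\<^sub>1 \<le> M * c (\<lambda>_. 1)"
    using c_mono[OF \<open>\<phi>\<^sub>1 \<in> L\<close> L_const, of M] c_scale[OF L_const, of M 1] \<phi>(2) assms
    by (simp add: \<phi>\<^sub>1_def)
  have \<phi>\<^sub>2_le: "ennreal (c \<phi>\<^sub>2) \<le> cap_lsc L c f"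
    unfolding cap_lsc_def
  proof (rule SUP_upper)
    have "ennreal (\<phi>\<^sub>2 x) \<le> f x" for x
    proof (cases "\<phi> x \<le> M")
      case False
      then have "ennreal (\<phi>\<^sub>2 x) = ennreal (\<phi> x) - ennreal M"
        using assms by (simp add: \<phi>\<^sub>2_def ennreal_minus)
      also have "\<dots> \<le> f x"
        using \<phi>(3)[of x] by (simp add: ennreal_minus_le_iff add.commute)
      finally show ?thesis .
    qed (simp add: \<phi>\<^sub>2_def)
    then show "\<phi>\<^sub>2 \<in> {\<phi> \<in> L. \<forall>x. 0 \<le> \<phi> x \<and> ennreal (\<phi> x) \<le> f x}"
      using \<open>\<phi>\<^sub>2 \<in> L\<close> by (simp add: \<phi>\<^sub>2_def)
  qed
  have "(\<lambda>x. \<phi>\<^sub>1 x + \<phi>\<^sub>2 x) = \<phi>"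
    by (auto simp: \<phi>\<^sub>1_def \<phi>\<^sub>2_def fun_eq_iff)
  then have "c \<phi> \<le> c \<phi>\<^sub>1 + c \<phi>\<^sub>2"
    using c_add[OF \<open>\<phi>\<^sub>1 \<in> L\<close> \<open>\<phi>\<^sub>2 \<in> L\<close>] by simp
  then have "ennreal (c \<phi>) \<le> ennreal (c \<phi>\<^sub>2) + ennreal (c \<phi>\<^sub>1)"
    using c_nonneg[OF \<open>\<phi>\<^sub>1 \<in> L\<close>] c_nonneg[OF \<open>\<phi>\<^sub>2 \<in> L\<close>]
    by (simp add: ennreal_plus[symmetric] ennreal_leI add.commute del: ennreal_plus)
  also have "\<dots> \<le> cap_lsc L c f + ennreal (M * c (\<lambda>_. 1))"
    using \<phi>\<^sub>1_le \<phi>\<^sub>2_le by (intro add_mono ennreal_leI)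
  finally show "ennreal (c \<phi>) \<le> cap_lsc L c f + ennreal (M * c (\<lambda>_. 1))" .
qed

lemma cap_ext_le_add_const:
  assumes "0 \<le> M" and "\<And>x. \<bar>h x\<bar> \<le> \<bar>g x\<bar> + M"
  shows "cap_ext L c h \<le> cap_ext L c g + ennreal (M * c (\<lambda>_. 1))"
proof -
  let ?K = "ennreal (M * c (\<lambda>_. 1))"
  have "cap_ext L c h - ?K \<le> cap_lsc L c f"
    if f: "f \<in> {f. lsc f \<and> (\<forall>x. ennreal \<bar>g x\<bar> \<le> f x)}" for f
  proof -
    have "ennreal \<bar>h x\<bar> \<le> f x + ennreal M" for x
    proof -
      have "ennreal \<bar>h x\<bar> \<le> ennreal \<bar>g x\<bar> + ennreal M"
        using assms by (simp add: ennreal_plus[symmetric] ennreal_leI del: ennreal_plus)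
      also have "\<dots> \<le> f x + ennreal M"
        using f by (simp add: add_right_mono)
      finally show ?thesis .
    qed
    then have "cap_ext L c h \<le> cap_lsc L c (\<lambda>x. f x + ennreal M)"
      unfolding cap_ext_def using f lsc_add_const by (intro INF_lower) auto
    also have "\<dots> \<le> cap_lsc L c f + ?K"
      by (rule cap_lsc_add_const[OF assms(1)])
    finally show ?thesis
      by (simp add: ennreal_minus_le_iff add.commute)
  qed
  then have "cap_ext L c h - ?K \<le> cap_ext L c g"
    unfolding cap_ext_def[of L c g] by (rule INF_greatest)
  then show ?thesis
    by (simp add: ennreal_minus_le_iff add.commute)
qed

lemma cap_ext_zero: "cap_ext L c (\<lambda>_. 0) = 0"
proof -
  have "cap_lsc L c (\<lambda>_. 0) \<le> 0"
    unfolding cap_lsc_def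
  proof (rule SUP_least)
    fix \<phi> assume "\<phi> \<in> {\<phi> \<in> L. \<forall>x. 0 \<le> \<phi> x \<and> ennreal (\<phi> x) \<le> 0}"
    then have "\<phi> \<in> L" "\<And>x. \<phi> x = 0"
      by (auto intro: order.antisym simp: ennreal_eq_0_iff)
    then have "c \<phi> \<le> c (\<lambda>x. 0 * 1)"
      using c_mono L_const by simp
    then show "ennreal (c \<phi>) \<le> 0"
      using c_scale[OF L_const, of 0 1] c_nonneg[OF \<open>\<phi> \<in> L\<close>] by simp
  qed
  moreover have "cap_ext L c (\<lambda>_. 0) \<le> cap_lsc L c (\<lambda>_. 0)"
    unfolding cap_ext_def by (rule INF_lower) (simp add: lsc_const)
  ultimately show ?thesis
    by simp
qed

lemma L_subset_L1_space: "L \<subseteq> L1_space L c"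
proof
  fix \<phi> assume "\<phi> \<in> L"
  then obtain M where "0 \<le> M" "\<And>x. \<bar>\<phi> x\<bar> \<le> M"
    using L_bounded_abs by blast
  then have "cap_ext L c \<phi> \<le> cap_ext L c (\<lambda>_. 0) + ennreal (M * c (\<lambda>_. 1))"
    by (intro cap_ext_le_add_const) auto
  then have "cap_ext L c \<phi> < \<infinity>"
    using cap_ext_zero by (simp add: le_less_trans)
  moreover have "\<exists>\<psi>\<in>L. cap_ext L c (\<lambda>x. \<phi> x - \<psi> x) < ennreal e" if "e > 0" for e
    using \<open>\<phi> \<in> L\<close> cap_ext_zero that by (intro bexI[of _ \<phi>]) auto
  ultimately show "\<phi> \<in> L1_space L c"
    unfolding L1_space_def by blast
qed

lemma L1_space_diff:
  assumes g: "g \<in> L1_space L c" and "d \<in> L"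
  shows "(\<lambda>x. g x - d x) \<in> L1_space L c"
proof -
  obtain M where "0 \<le> M" and M: "\<And>x. \<bar>d x\<bar> \<le> M"
    using L_bounded_abs[OF \<open>d \<in> L\<close>] by blast
  have "\<bar>g x - d x\<bar> \<le> \<bar>g x\<bar> + M" for x
    using M[of x] abs_triangle_ineq4[of "g x" "d x"] by linarith
  then have "cap_ext L c (\<lambda>x. g x - d x) \<le> cap_ext L c g + ennreal (M * c (\<lambda>_. 1))"
    using \<open>0 \<le> M\<close> by (rule cap_ext_le_add_const[rotated])
  then have "cap_ext L c (\<lambda>x. g x - d x) < \<infinity>"
    using g unfolding L1_space_def by (simp add: le_less_trans)
  moreover have "\<exists>\<psi>\<in>L. cap_ext L c (\<lambda>x. (g x - d x) - \<psi> x) < ennreal e" if "e > 0" for e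
  proof -
    obtain \<phi> where "\<phi> \<in> L" "cap_ext L c (\<lambda>x. g x - \<phi> x) < ennreal e"
      using g \<open>e > 0\<close> unfolding L1_space_def by blast
    then show ?thesis
      using L_diff[OF \<open>\<phi> \<in> L\<close> \<open>d \<in> L\<close>] by (intro bexI[of _ "\<lambda>x. \<phi> x - d x"]) auto
  qed
  ultimately show ?thesis
    unfolding L1_space_def by blast
qed

lemma L1_space_dense_if_uniformly_dense:
  assumes D: "\<forall>f\<in>L. \<forall>e>0. \<exists>g\<in>D. \<forall>x. \<bar>f x - g x\<bar> < e"
  shows "\<forall>g\<in>L1_space L c. \<forall>e>0. \<exists>d\<in>D. cap_ext L c (\<lambda>x. g x - d x) < ennreal e"
proof (intro ballI allI impI)
  fix g and e :: real
  assume g: "g \<in> L1_space L c" and "e > 0"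
  let ?c1 = "c (\<lambda>_. 1)"
  define \<delta> where "\<delta> = e / (2 * (?c1 + 1))"
  have "0 \<le> ?c1"
    using c_nonneg[OF L_const] .
  have "0 < \<delta>"
    using \<open>e > 0\<close> \<open>0 \<le> ?c1\<close> by (simp add: \<delta>_def)
  have "\<delta> * ?c1 \<le> e / 2"
    using \<open>e > 0\<close> \<open>0 \<le> ?c1\<close> by (simp add: \<delta>_def field_simps)
  obtain \<phi> where "\<phi> \<in> L" and \<phi>: "cap_ext L c (\<lambda>x. g x - \<phi> x) < ennreal (e / 2)"
    using g half_gt_zero[OF \<open>e > 0\<close>] unfolding L1_space_def by blast
  obtain \<psi> where "\<psi> \<in> D" and \<psi>: "\<And>x. \<bar>\<phi> x - \<psi> x\<bar> < \<delta>"
    using D \<open>\<phi> \<in> L\<close> \<open>0 < \<delta>\<close> by blast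
  have "\<bar>g x - \<psi> x\<bar> \<le> \<bar>g x - \<phi> x\<bar> + \<delta>" for x
    using \<psi>[of x] abs_triangle_ineq[of "g x - \<phi> x" "\<phi> x - \<psi> x"] by linarith
  then have "cap_ext L c (\<lambda>x. g x - \<psi> x) \<le> cap_ext L c (\<lambda>x. g x - \<phi> x) + ennreal (\<delta> * ?c1)"
    using \<open>0 < \<delta>\<close> by (intro cap_ext_le_add_const) auto
  also have "\<dots> < ennreal (\<delta> * ?c1) + ennreal (e / 2)"
    using \<phi> by (subst add.commute) (simp only: ennreal_add_left_cancel_less, simp)
  also have "\<dots> = ennreal (\<delta> * ?c1 + e / 2)"
    using \<open>0 < \<delta>\<close> \<open>0 \<le> ?c1\<close> \<open>e > 0\<close> by simp
  also have "\<dots> \<le> ennreal e"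
    using \<open>\<delta> * ?c1 \<le> e / 2\<close> by (intro ennreal_leI) simp
  finally show "\<exists>d\<in>D. cap_ext L c (\<lambda>x. g x - d x) < ennreal e"
    using \<open>\<psi> \<in> D\<close> by blast
qed

lemma L1_space_separable:
  assumes "compact (UNIV :: 'a set)" and "metrizable_space (euclidean :: 'a topology)"
  obtains D where "countable D" "D \<subseteq> L"
    "\<forall>g\<in>L1_space L c. \<forall>e>0. \<exists>d\<in>D. cap_ext L c (\<lambda>x. g x - d x) < ennreal e"
proof -
  have "second_countable (euclidean :: 'a topology)"
    using assms by (intro compact_metrizable_imp_second_countable) (simp_all add: compact_space_def)
  then have "\<exists>D. countable D \<and> D \<subseteq> L \<and> (\<forall>f\<in>L. \<forall>e>0. \<exists>g\<in>D. \<forall>x. \<bar>f x - g x\<bar> < e)"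
    by (rule countable_uniformly_dense_subset[OF assms(1)]) (rule L_continuous)
  then show thesis
    using that L1_space_dense_if_uniformly_dense by blast
qed

lemma topspace_weak_star_ball: "topspace (weak_star_ball L c) = dual_ball L c"
  unfolding weak_star_ball_def dual_ball_def by (auto simp: PiE_def)

lemma dual_ball_diff:
  assumes u: "u \<in> dual_ball L c" and g: "g \<in> L1_space L c" and "d \<in> L"
  shows "u (\<lambda>x. g x - d x) = u g - u d"
proof -
  have add: "\<And>g h. g \<in> L1_space L c \<Longrightarrow> h \<in> L1_space L c \<Longrightarrow> u (\<lambda>x. g x + h x) = u g + u h"
    and scale: "\<And>g r. g \<in> L1_space L c \<Longrightarrow> u (\<lambda>x. r * g x) = r * u g"
    using u unfolding dual_ball_def by blast+
  have "d \<in> L1_space L c" "(\<lambda>x. -1 * d x) \<in> L1_space L c"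
    using L_subset_L1_space L_scale \<open>d \<in> L\<close> by blast+
  then show ?thesis
    using add[OF g \<open>(\<lambda>x. -1 * d x) \<in> L1_space L c\<close>] scale[of d "-1"] by simp
qed

lemma dual_ball_abs_le:
  assumes "u \<in> dual_ball L c" and "g \<in> L1_space L c"
  shows "\<bar>u g\<bar> \<le> enn2real (cap_ext L c g)"
proof -
  have "ennreal \<bar>u g\<bar> \<le> cap_ext L c g"
    using assms unfolding dual_ball_def by blast
  also have "\<dots> = ennreal (enn2real (cap_ext L c g))"
    using \<open>g \<in> L1_space L c\<close> unfolding L1_space_def by (simp add: less_top)
  finally show ?thesis
    by (simp add: ennreal_le_iff)
qed

lemma closedin_dual_ball:
  "closedin (product_topology (\<lambda>_. euclideanreal) (L1_space L c)) (dual_ball L c)"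
proof -
  let ?I = "L1_space L c"
  let ?X = "product_topology (\<lambda>_. euclideanreal) ?I"
  have proj: "continuous_map ?X euclideanreal (\<lambda>u. u g)" for g
    by (rule continuous_map_product_coordinate)
  let ?A = "{u \<in> topspace ?X. \<forall>g\<in>?I. \<forall>h\<in>?I. u (\<lambda>x. g x + h x) = u g + u h}"
  let ?S = "{u \<in> topspace ?X. \<forall>g\<in>?I. \<forall>r\<in>UNIV. u (\<lambda>x. r * g x) = r * u g}"
  let ?B = "{u \<in> topspace ?X. \<forall>g\<in>?I. \<bar>u g\<bar> \<in> {..enn2real (cap_ext L c g)}}"
  have bound: "ennreal \<bar>u g\<bar> \<le> cap_ext L c g"
    if "g \<in> ?I" "\<bar>u g\<bar> \<le> enn2real (cap_ext L c g)" for u g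
  proof -
    have "ennreal \<bar>u g\<bar> \<le> ennreal (enn2real (cap_ext L c g))"
      using that(2) by (rule ennreal_leI)
    also have "\<dots> = cap_ext L c g"
      using that(1) unfolding L1_space_def by simp
    finally show ?thesis .
  qed
  have eq: "dual_ball L c = ?A \<inter> ?S \<inter> ?B"
  proof (intro set_eqI iffI)
    fix u assume u: "u \<in> dual_ball L c"
    then show "u \<in> ?A \<inter> ?S \<inter> ?B"
      using dual_ball_abs_le[OF u] unfolding dual_ball_def by (simp add: PiE_def)
  next
    fix u assume "u \<in> ?A \<inter> ?S \<inter> ?B"
    then show "u \<in> dual_ball L c"
      using bound unfolding dual_ball_def by (simp add: PiE_def)
  qed
  have "closedin ?X ?A"
    by (intro closedin_Collect_Ball closedin_continuous_maps_eq[where Y = euclideanreal]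
        continuous_map_add proj) simp
  moreover have "closedin ?X ?S"
    by (intro closedin_Collect_Ball closedin_continuous_maps_eq[where Y = euclideanreal]
        continuous_map_real_mult_left proj) simp
  moreover have "closedin ?X ?B"
    by (intro closedin_Collect_Ball closedin_continuous_map_preimage[where Y = euclideanreal]
        continuous_map_real_abs proj) (simp add: closed_closedin[symmetric])
  ultimately show ?thesis
    unfolding eq by (intro closedin_Int)
qed

lemma compact_space_weak_star_ball: "compact_space (weak_star_ball L c)"
proof -
  let ?I = "L1_space L c"
  let ?X = "product_topology (\<lambda>_. euclideanreal) ?I"
  let ?K = "PiE ?I (\<lambda>g. {- enn2real (cap_ext L c g) .. enn2real (cap_ext L c g)})"
  have "dual_ball L c \<subseteq> ?K"
  proof
    fix u assume u: "u \<in> dual_ball L c"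
    then have "u \<in> extensional ?I"
      unfolding dual_ball_def by blast
    moreover have "u g \<in> {- enn2real (cap_ext L c g) .. enn2real (cap_ext L c g)}" if "g \<in> ?I" for g
      using dual_ball_abs_le[OF u that] by (auto simp: abs_le_iff)
    ultimately show "u \<in> ?K"
      by (simp add: PiE_iff)
  qed
  moreover have "compactin ?X ?K"
    by (simp add: compactin_PiE)
  ultimately have "compactin ?X (dual_ball L c)"
    using closedin_dual_ball closed_compactin by blast
  then show ?thesis
    unfolding weak_star_ball_def by (rule compact_space_subtopology)
qed

lemma dual_ball_eqI:
  assumes u: "u \<in> dual_ball L c" and v: "v \<in> dual_ball L c" and "D \<subseteq> L"
    and dense: "\<forall>g\<in>L1_space L c. \<forall>e>0. \<exists>d\<in>D. cap_ext L c (\<lambda>x. g x - d x) < ennreal e"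
    and agree: "\<And>d. d \<in> D \<Longrightarrow> u d = v d"
  shows "u = v"
proof
  fix g
  show "u g = v g"
  proof (cases "g \<in> L1_space L c")
    case False
    then show ?thesis
      using u v unfolding dual_ball_def by (simp add: extensional_def)
  next
    case True
    have close: "\<bar>u g - v g\<bar> < 2 * e" if "e > 0" for e
    proof -
      obtain d where "d \<in> D" and d: "cap_ext L c (\<lambda>x. g x - d x) < ennreal e"
        using dense True \<open>e > 0\<close> by blast
      then have "d \<in> L"
        using \<open>D \<subseteq> L\<close> by blast
      have gd: "(\<lambda>x. g x - d x) \<in> L1_space L c"
        using L1_space_diff[OF True \<open>d \<in> L\<close>] .
      have small: "\<bar>w (\<lambda>x. g x - d x)\<bar> < e" if "w \<in> dual_ball L c" for w
      proof -
        have "ennreal \<bar>w (\<lambda>x. g x - d x)\<bar> \<le> cap_ext L c (\<lambda>x. g x - d x)"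
          using that gd unfolding dual_ball_def by blast
        then show ?thesis
          using d by (simp add: ennreal_less_iff[symmetric] del: ennreal_less_iff)
      qed
      then show ?thesis
        using small[OF u] small[OF v] dual_ball_diff[OF u True \<open>d \<in> L\<close>]
          dual_ball_diff[OF v True \<open>d \<in> L\<close>] agree[OF \<open>d \<in> D\<close>]
        unfolding abs_less_iff by linarith
    qed
    show ?thesis
    proof (rule ccontr)
      assume "u g \<noteq> v g"
      then have "\<bar>u g - v g\<bar> / 2 > 0"
        by simp
      from close[OF this] show False
        by simp
    qed
  qed
qed

lemma metrizable_space_weak_star_ball:
  assumes "countable D" and "D \<subseteq> L"
    and dense: "\<forall>g\<in>L1_space L c. \<forall>e>0. \<exists>d\<in>D. cap_ext L c (\<lambda>x. g x - d x) < ennreal e"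
  shows "metrizable_space (weak_star_ball L c)"
proof (rule metrizable_space_if_continuous_injective)
  show "compact_space (weak_star_ball L c)"
    by (rule compact_space_weak_star_ball)
  show "metrizable_space (product_topology (\<lambda>_. euclideanreal) D)"
    using \<open>countable D\<close>
    by (auto simp: metrizable_space_product_topology metrizable_space_euclidean intro: countable_subset)
  have "continuous_map (weak_star_ball L c) euclideanreal (\<lambda>u. u d)" for d
    unfolding weak_star_ball_def
    by (intro continuous_map_from_subtopology continuous_map_product_coordinate)
  then show "continuous_map (weak_star_ball L c) (product_topology (\<lambda>_. euclideanreal) D)
      (\<lambda>u. restrict u D)"
    by (auto simp: continuous_map_componentwise)
  show "inj_on (\<lambda>u. restrict u D) (topspace (weak_star_ball L c))"
  proof (rule inj_onI)
    fix u v
    assume "u \<in> topspace (weak_star_ball L c)" "v \<in> topspace (weak_star_ball L c)"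
      and eq: "restrict u D = restrict v D"
    moreover have "u d = v d" if "d \<in> D" for d
      using fun_cong[OF eq, of d] that by simp
    ultimately show "u = v"
      unfolding topspace_weak_star_ball using dual_ball_eqI[OF _ _ \<open>D \<subseteq> L\<close> dense] by blast
  qed
qed

end

theorem proposition2p10:
  fixes L :: "('a::topological_space \<Rightarrow> real) set"
    and c :: "('a \<Rightarrow> real) \<Rightarrow> real"
  assumes "compact (UNIV :: 'a set)"
    and "metrizable_space (euclidean :: 'a topology)"
    and "admissible_lattice L"
    and "capacity L c"
  shows "(\<exists>D. countable D \<and> D \<subseteq> L1_space L c \<and>
            (\<forall>g\<in>L1_space L c. \<forall>e>0. \<exists>d\<in>D. cap_ext L c (\<lambda>x. g x - d x) < ennreal e))
       \<and> compact_space (weak_star_ball L c)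
       \<and> metrizable_space (weak_star_ball L c)"
proof -
  interpret lattice_capacity L c
    using assms(3,4) by (rule lattice_capacity.intro)
  obtain D where "countable D" "D \<subseteq> L"
    and dense: "\<forall>g\<in>L1_space L c. \<forall>e>0. \<exists>d\<in>D. cap_ext L c (\<lambda>x. g x - d x) < ennreal e"
    using L1_space_separable[OF assms(1,2)] by blast
  moreover have "D \<subseteq> L1_space L c"
    using \<open>D \<subseteq> L\<close> L_subset_L1_space by blast
  ultimately show ?thesis
    using compact_space_weak_star_ball metrizable_space_weak_star_ball by blast
qed

end
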